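(* Let $D\subseteq\mathbb{R}^3\setminus\{0\}$ be open, $\Omega=\mathbb{R}^3\times D$, and let $\vec\mu(\vec M,\vec\gamma)=\vec\nu(\vec\gamma,\vec M\cdot\vec\gamma)$ with $\vec\nu:D\times\mathbb{R}\to\mathbb{R}^3$ smooth. A smooth function $C:\Omega\to\mathbb{R}$ satisfies $\Pi_{\vec\mu}\nabla C=0$ on $\Omega$ (i.e. $C$ is a Casimir function of $\Pi_{\vec\mu}$) if and only if there is a smooth $F:D\times\mathbb{R}\to\mathbb{R}$ with $C(\vec M,\vec\gamma)=F(\vec\gamma,\vec M\cdot\vec\gamma)$ and $$\vec\gamma\times\big((\partial_sF)(\vec\gamma,s)\,\vec\nu(\vec\gamma,s)-\nabla_{\vec\gamma}F(\vec\gamma,s)\big)=\vec 0\quad\text{for all }(\vec\gamma,s)\in D\times\mathbb{R},$$ where $\nabla_{\vec\gamma}F$ is the gradient in $\vec\gamma$ with $s$ held fixed. In particular $C_1=\tfrac12|\vec\gamma|^2$ is always a Casimir function of $\Pi_{\vec\mu}$.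
   Context: Coordinates on $\mathbb{R}^6$ are $(\vec M,\vec\gamma)=(M_1,M_2,M_3,\gamma_1,\gamma_2,\gamma_3)$. For a smooth $\vec\mu=(\mu_1,\mu_2,\mu_3)$ of $(\vec M,\vec\gamma)$, $\Pi_{\vec\mu}$ is the skew-symmetric $6\times6$ matrix $$\Pi_{\vec\mu}=\begin{bmatrix}0&-M_3-\mu_3&M_2+\mu_2&0&-\gamma_3&\gamma_2\\ M_3+\mu_3&0&-M_1-\mu_1&\gamma_3&0&-\gamma_1\\ -M_2-\mu_2&M_1+\mu_1&0&-\gamma_2&\gamma_1&0\\ 0&-\gamma_3&\gamma_2&0&0&0\\ \gamma_3&0&-\gamma_1&0&0&0\\ -\gamma_2&\gamma_1&0&0&0&0\end{bmatrix},$$ and $\{f,g\}_{\vec\mu}=(\nabla f)^T\Pi_{\vec\mu}\nabla g$ for smooth $f,g$ (gradient in all six variables). *)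

theory Defs
  imports "HOL-Analysis.Analysis"
begin

fun Ck_on :: "nat \<Rightarrow> 'a::real_normed_vector set \<Rightarrow> ('a \<Rightarrow> 'b::real_normed_vector) \<Rightarrow> bool" where
  "Ck_on 0 S f = continuous_on S f"
| "Ck_on (Suc k) S f =
     (\<exists>f'. (\<forall>x\<in>S. (f has_derivative f' x) (at x)) \<and> (\<forall>v. Ck_on k S (\<lambda>x. f' x v)))"

definition smooth_on :: "'a::real_normed_vector set \<Rightarrow> ('a \<Rightarrow> 'b::real_normed_vector) \<Rightarrow> bool" where
  "smooth_on S f \<longleftrightarrow> (\<forall>k. Ck_on k S f)"

text \<open>Points of R^6 are pairs (M, gamma) of vectors in R^3; coordinates indexed 0..5 are
  M1, M2, M3, gamma1, gamma2, gamma3.\<close>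
definition coord6 :: "nat \<Rightarrow> (real^3) \<times> (real^3)" where
  "coord6 i = [(axis 1 1, 0), (axis 2 1, 0), (axis 3 1, 0),
               (0, axis 1 1), (0, axis 2 1), (0, axis 3 1)] ! i"

definition grad6 :: "((real^3) \<times> (real^3) \<Rightarrow> real) \<Rightarrow> (real^3) \<times> (real^3) \<Rightarrow> nat \<Rightarrow> real" where
  "grad6 C p i = frechet_derivative C (at p) (coord6 i)"

definition Pi_mat :: "real^3 \<Rightarrow> (real^3) \<times> (real^3) \<Rightarrow> nat \<Rightarrow> nat \<Rightarrow> real" where
  "Pi_mat mu p i j = (case p of (M, g) \<Rightarrow>
     [[0, -(M$3) - mu$3, M$2 + mu$2, 0, -(g$3), g$2],
      [M$3 + mu$3, 0, -(M$1) - mu$1, g$3, 0, -(g$1)],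
      [-(M$2) - mu$2, M$1 + mu$1, 0, -(g$2), g$1, 0],
      [0, -(g$3), g$2, 0, 0, 0],
      [g$3, 0, -(g$1), 0, 0, 0],
      [-(g$2), g$1, 0, 0, 0, 0]] ! i ! j)"

definition mu_of :: "((real^3) \<times> real \<Rightarrow> real^3) \<Rightarrow> (real^3) \<times> (real^3) \<Rightarrow> real^3" where
  "mu_of \<nu> p = (case p of (M, g) \<Rightarrow> \<nu> (g, M \<bullet> g))"

definition is_casimir :: "((real^3) \<times> real \<Rightarrow> real^3) \<Rightarrow> (real^3) set \<Rightarrow> ((real^3) \<times> (real^3) \<Rightarrow> real) \<Rightarrow> bool" where
  "is_casimir \<nu> D C \<longleftrightarrow>
     (\<forall>p \<in> UNIV \<times> D. \<forall>i<6. (\<Sum>j<6. Pi_mat (mu_of \<nu> p) p i j * grad6 C p j) = 0)"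

definition d_s :: "((real^3) \<times> real \<Rightarrow> real) \<Rightarrow> (real^3) \<times> real \<Rightarrow> real" where
  "d_s F q = frechet_derivative F (at q) (0, 1)"

definition grad_gamma :: "((real^3) \<times> real \<Rightarrow> real) \<Rightarrow> (real^3) \<times> real \<Rightarrow> real^3" where
  "grad_gamma F q = (\<chi> k. frechet_derivative F (at q) (axis k 1, 0))"

end

theory Submission
  imports Defs
begin

(* Writing the gradient of C as the pair of partial gradients a = grad_M C, b = grad_g C,
   the matrix Pi_mu acts by  Pi_mu (a, b) = ((M + mu) x a + gamma x b,  gamma x a),
   so C is a Casimir iff  gamma x a = 0  and  (M + mu) x a + gamma x b = 0  (Pi_mat_kernel_iff).

   Necessity of the form F(gamma, M . gamma): the condition gamma x a = 0 with gamma <> 0 says that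
   the derivative of C vanishes in every M-direction w orthogonal to gamma, so C is constant on the
   affine planes {M . gamma = s} and equals the smooth function  reduced C  evaluated at
   (gamma, M . gamma).

   The cross-product condition: if C(M, gamma) = F(gamma, M . gamma) then by the chain rule
   a = F_s gamma and b = grad_gamma F + F_s M; then gamma x a = 0 holds automatically and the
   remaining condition collapses to  gamma x (F_s nu - grad_gamma F) = 0  (casimir_iff_reduced). *)


section \<open>Calculus of $C^k$ functions\<close>

lemma Ck_cong:
  assumes "open S" and "\<And>x. x \<in> S \<Longrightarrow> f x = g x" and "Ck_on k S f"
  shows "Ck_on k S g"
proof (cases k)
  case 0
  then show ?thesis using assms continuous_on_cong by force
next
  case (Suc n)
  then obtain f' where f': "\<forall>x\<in>S. (f has_derivative f' x) (at x)" "\<forall>v. Ck_on n S (\<lambda>x. f' x v)"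
    using assms(3) by auto
  have "\<forall>x\<in>S. (g has_derivative f' x) (at x)"
    using f'(1) assms(1,2) by (blast intro: has_derivative_transform_within_open)
  then show ?thesis using f'(2) Suc by auto
qed

lemma Ck_Suc_imp_Ck: "Ck_on (Suc k) S f \<Longrightarrow> Ck_on k S f"
proof (induction k arbitrary: f)
  case 0
  then obtain f' where "\<forall>x\<in>S. (f has_derivative f' x) (at x)" by auto
  then show ?case
    by (auto intro!: continuous_at_imp_continuous_on dest: has_derivative_continuous)
next
  case (Suc k)
  then show ?case by auto
qed

lemma smooth_on_imp_differentiable:
  assumes "smooth_on S f" and "x \<in> S"
  shows "f differentiable (at x)"
proof -
  have "Ck_on (Suc 0) S f" using assms(1) unfolding smooth_on_def by blast
  then obtain f' where "\<forall>x\<in>S. (f has_derivative f' x) (at x)" by auto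
  then show ?thesis using assms(2) differentiable_def by blast
qed

lemma Ck_const: "Ck_on k S (\<lambda>x. c)"
proof (induction k arbitrary: c)
  case 0
  then show ?case by simp
next
  case (Suc k)
  have "\<forall>x\<in>S. ((\<lambda>x. c) has_derivative (\<lambda>h. 0)) (at x)" by simp
  then show ?case using Suc.IH by (auto intro!: exI[of _ "\<lambda>x h. 0"])
qed

lemma Ck_linear:
  assumes "bounded_linear L"
  shows "Ck_on k S L"
proof (cases k)
  case 0
  then show ?thesis using assms by (simp add: linear_continuous_on)
next
  case (Suc n)
  have "\<forall>x\<in>S. (L has_derivative L) (at x)"
    using assms bounded_linear_imp_has_derivative by auto
  then show ?thesis using Suc Ck_const by (auto intro!: exI[of _ "\<lambda>x. L"])
qed

lemma Ck_compose_linear: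
  assumes "bounded_linear L" and "Ck_on k S f"
  shows "Ck_on k S (\<lambda>x. L (f x))"
  using assms(2)
proof (induction k arbitrary: f)
  case 0
  then show ?case by (auto intro: continuous_on_compose2[OF linear_continuous_on[OF assms(1)]])
next
  case (Suc k)
  then obtain f' where f': "\<forall>x\<in>S. (f has_derivative f' x) (at x)" "\<forall>v. Ck_on k S (\<lambda>x. f' x v)"
    by auto
  have "\<forall>x\<in>S. ((\<lambda>x. L (f x)) has_derivative (\<lambda>h. L (f' x h))) (at x)"
    using f'(1) assms(1) bounded_linear.has_derivative by blast
  then show ?case using Suc.IH f'(2) by auto
qed

lemma Ck_add:
  assumes "Ck_on k S f" and "Ck_on k S g"
  shows "Ck_on k S (\<lambda>x. f x + g x)"
  using assms
proof (induction k arbitrary: f g)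
  case 0
  then show ?case by (auto intro: continuous_on_add)
next
  case (Suc k)
  then obtain f' g' where f': "\<forall>x\<in>S. (f has_derivative f' x) (at x)" "\<forall>v. Ck_on k S (\<lambda>x. f' x v)"
    and g': "\<forall>x\<in>S. (g has_derivative g' x) (at x)" "\<forall>v. Ck_on k S (\<lambda>x. g' x v)"
    by auto
  have "\<forall>x\<in>S. ((\<lambda>x. f x + g x) has_derivative (\<lambda>h. f' x h + g' x h)) (at x)"
    using f'(1) g'(1) has_derivative_add by blast
  then show ?case using Suc.IH f'(2) g'(2) by auto
qed

lemma Ck_sum:
  assumes "finite I" and "\<And>i. i \<in> I \<Longrightarrow> Ck_on k S (f i)"
  shows "Ck_on k S (\<lambda>x. \<Sum>i\<in>I. f i x)"
  using assms by (induction I rule: finite_induct) (auto intro: Ck_add Ck_const)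

lemma Ck_bilinear:
  assumes "bounded_bilinear mul" and "Ck_on k S f" and "Ck_on k S g"
  shows "Ck_on k S (\<lambda>x. mul (f x) (g x))"
  using assms(2,3)
proof (induction k arbitrary: f g)
  case 0
  then show ?case by (auto intro: bounded_bilinear.continuous_on[OF assms(1)])
next
  case (Suc k)
  then obtain f' g' where f': "\<forall>x\<in>S. (f has_derivative f' x) (at x)" "\<forall>v. Ck_on k S (\<lambda>x. f' x v)"
    and g': "\<forall>x\<in>S. (g has_derivative g' x) (at x)" "\<forall>v. Ck_on k S (\<lambda>x. g' x v)"
    by auto
  have fg: "Ck_on k S f" "Ck_on k S g" using Suc.prems Ck_Suc_imp_Ck by blast+
  have "\<forall>x\<in>S. ((\<lambda>x. mul (f x) (g x))
      has_derivative (\<lambda>h. mul (f x) (g' x h) + mul (f' x h) (g x))) (at x)"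
    using f'(1) g'(1) bounded_bilinear.FDERIV[OF assms(1)] by blast
  moreover have "Ck_on k S (\<lambda>x. mul (f x) (g' x v) + mul (f' x v) (g x))" for v
    using Ck_add Suc.IH[OF fg(1) g'(2)[rule_format]] Suc.IH[OF f'(2)[rule_format] fg(2)] by blast
  ultimately show ?case by auto
qed

lemma Ck_Pair:
  assumes "Ck_on k S f" and "Ck_on k S g"
  shows "Ck_on k S (\<lambda>x. (f x, g x))"
  using assms
proof (induction k arbitrary: f g)
  case 0
  then show ?case by (auto intro: continuous_on_Pair)
next
  case (Suc k)
  then obtain f' g' where f': "\<forall>x\<in>S. (f has_derivative f' x) (at x)" "\<forall>v. Ck_on k S (\<lambda>x. f' x v)"
    and g': "\<forall>x\<in>S. (g has_derivative g' x) (at x)" "\<forall>v. Ck_on k S (\<lambda>x. g' x v)"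
    by auto
  have "\<forall>x\<in>S. ((\<lambda>x. (f x, g x)) has_derivative (\<lambda>h. (f' x h, g' x h))) (at x)"
    using f'(1) g'(1) has_derivative_Pair by blast
  then show ?case using Suc.IH f'(2) g'(2) by auto
qed

text \<open>Chain rule for $C^k$ maps. The inner map takes values in a Euclidean space, so that the
  derivative of the composite can be written as a finite sum over a basis.\<close>
lemma Ck_compose:
  fixes g :: "'a::real_normed_vector \<Rightarrow> 'b::euclidean_space" and f :: "'b \<Rightarrow> 'c::real_normed_vector"
  assumes "open S" and "g ` S \<subseteq> T" and "Ck_on k T f" and "Ck_on k S g"
  shows "Ck_on k S (\<lambda>x. f (g x))"
  using assms(2-4)
proof (induction k arbitrary: f g)
  case 0
  then have "continuous_on T f" and "continuous_on S g" and "g ` S \<subseteq> T" by simp_all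
  then have "continuous_on S (\<lambda>x. f (g x))" by (rule continuous_on_compose2)
  then show ?case by simp
next
  case (Suc k)
  then obtain f' g' where f': "\<forall>y\<in>T. (f has_derivative f' y) (at y)" "\<forall>v. Ck_on k T (\<lambda>y. f' y v)"
    and g': "\<forall>x\<in>S. (g has_derivative g' x) (at x)" "\<forall>v. Ck_on k S (\<lambda>x. g' x v)"
    by auto
  have gk: "Ck_on k S g" using Suc.prems(3) Ck_Suc_imp_Ck by blast
  have gT: "x \<in> S \<Longrightarrow> g x \<in> T" for x using Suc.prems(1) by blast
  have "((\<lambda>x. f (g x)) has_derivative (\<lambda>h. f' (g x) (g' x h))) (at x)" if "x \<in> S" for x
    using has_derivative_compose[OF g'(1)[rule_format, OF that] f'(1)[rule_format, OF gT[OF that]]] .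
  moreover have "Ck_on k S (\<lambda>x. f' (g x) (g' x v))" for v
  proof -
    have sum: "Ck_on k S (\<lambda>x. \<Sum>b\<in>Basis. (g' x v \<bullet> b) *\<^sub>R f' (g x) b)"
    proof (rule Ck_sum[OF finite_Basis])
      fix b :: 'b
      have "Ck_on k S (\<lambda>x. g' x v \<bullet> b)"
        using Ck_compose_linear[OF bounded_linear_inner_left g'(2)[rule_format]] .
      moreover have "Ck_on k S (\<lambda>x. f' (g x) b)"
        using Suc.IH[OF Suc.prems(1) f'(2)[rule_format] gk] .
      ultimately show "Ck_on k S (\<lambda>x. (g' x v \<bullet> b) *\<^sub>R f' (g x) b)"
        using Ck_bilinear[OF bounded_bilinear_scaleR] by blast
    qed
    have repr: "(\<Sum>b\<in>Basis. (g' x v \<bullet> b) *\<^sub>R f' (g x) b) = f' (g x) (g' x v)" if "x \<in> S" for x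
    proof -
      have lin: "linear (f' (g x))" using f'(1) gT[OF that] has_derivative_linear by blast
      have "f' (g x) (g' x v) = f' (g x) (\<Sum>b\<in>Basis. (g' x v \<bullet> b) *\<^sub>R b)"
        by (simp add: euclidean_representation)
      also have "\<dots> = (\<Sum>b\<in>Basis. (g' x v \<bullet> b) *\<^sub>R f' (g x) b)"
        using lin by (simp add: linear_sum linear_scale)
      finally show ?thesis by simp
    qed
    show ?thesis using repr by (intro Ck_cong[OF assms(1) _ sum]) simp
  qed
  ultimately show ?case by (auto intro!: exI[of _ "\<lambda>x h. f' (g x) (g' x h)"])
qed

text \<open>Real inversion is $C^k$ away from 0: its derivative is a product of inverses.\<close>
lemma Ck_inverse: "Ck_on k (-{0}) (inverse :: real \<Rightarrow> real)"
proof (induction k)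
  case 0
  then show ?case by (auto intro: continuous_on_inverse continuous_on_id)
next
  case (Suc k)
  have "\<forall>x\<in>-{0}. ((inverse::real\<Rightarrow>real) has_derivative (\<lambda>h. - (inverse x * h * inverse x))) (at x)"
    using has_derivative_inverse' by auto
  moreover have "Ck_on k (-{0}) (\<lambda>x. - (inverse x * v * inverse x))" for v :: real
  proof -
    have "Ck_on k (-{0}) (\<lambda>x. inverse x * v * inverse x)"
      using Ck_bilinear[OF bounded_bilinear_mult Ck_bilinear[OF bounded_bilinear_mult Suc.IH Ck_const] Suc.IH] .
    then show ?thesis using Ck_compose_linear[OF bounded_linear_minus[OF bounded_linear_ident]] by blast
  qed
  ultimately show ?case by auto
qed


lemma linear_Pair_split:
  fixes L :: "'a::real_vector \<times> real \<Rightarrow> real"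
  assumes "linear L"
  shows "L (a, c) = L (a, 0) + c * L (0, 1)"
proof -
  have "L (a, c) = L ((a, 0) + c *\<^sub>R (0, 1))" by simp
  also have "\<dots> = L (a, 0) + c * L (0, 1)"
    by (simp only: linear_add[OF assms] linear_scale[OF assms] real_scaleR_def)
  finally show ?thesis .
qed

lemma linear_on_first_factor:
  fixes L :: "(real^'n::finite) \<times> 'b::real_vector \<Rightarrow> real"
  assumes "linear L"
  shows "L (w, 0) = w \<bullet> (\<chi> k. L (axis k 1, 0))"
proof -
  have lin: "linear (\<lambda>w. L (w, 0))"
  proof
    show "L (x + y, 0) = L (x, 0) + L (y, 0)" for x y
      using linear_add[OF assms, of "(x, 0)" "(y, 0)"] by simp
    show "L (c *\<^sub>R x, 0) = c *\<^sub>R L (x, 0)" for c x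
      using linear_scale[OF assms, of c "(x, 0)"] by simp
  qed
  have expand: "(\<Sum>k\<in>UNIV. w$k *\<^sub>R axis k 1) = w"
    using basis_expansion[of w] by (simp add: scalar_mult_eq_scaleR)
  have "L (w, 0) = L (\<Sum>k\<in>UNIV. w$k *\<^sub>R axis k 1, 0)" by (simp only: expand)
  also have "\<dots> = (\<Sum>k\<in>UNIV. w$k * L (axis k 1, 0))"
    using linear_sum[OF lin, of "\<lambda>k. w$k *\<^sub>R axis k 1" UNIV] linear_scale[OF lin] by simp
  finally show ?thesis by (simp add: inner_vec_def)
qed

lemma cross_zero_imp_orthogonal:
  fixes g a w :: "real^3"
  assumes "cross3 g a = 0" and "g \<noteq> 0" and "w \<bullet> g = 0"
  shows "w \<bullet> a = 0"
proof -
  have "cross3 w (cross3 g a) = (w \<bullet> a) *\<^sub>R g - (w \<bullet> g) *\<^sub>R a" by (rule Lagrange)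
  then show ?thesis using assms by simp
qed


section \<open>The Poisson matrix in block form\<close>

definition grad_M :: "((real^3) \<times> (real^3) \<Rightarrow> real) \<Rightarrow> (real^3) \<times> (real^3) \<Rightarrow> real^3" where
  "grad_M C p = (\<chi> k. frechet_derivative C (at p) (axis k 1, 0))"

definition grad_g :: "((real^3) \<times> (real^3) \<Rightarrow> real) \<Rightarrow> (real^3) \<times> (real^3) \<Rightarrow> real^3" where
  "grad_g C p = (\<chi> k. frechet_derivative C (at p) (0, axis k 1))"

lemma Pi_mat_kernel_iff:
  fixes mu M g :: "real^3" and a :: "nat \<Rightarrow> real"
  shows "(\<forall>i<6. (\<Sum>j<6. Pi_mat mu (M, g) i j * a j) = 0) \<longleftrightarrow>
           cross3 (M + mu) (vector [a 0, a 1, a 2]) + cross3 g (vector [a 3, a 4, a 5]) = 0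
         \<and> cross3 g (vector [a 0, a 1, a 2]) = 0"
  by (simp add: less_Suc_eq numeral_eq_Suc all_conj_distrib Pi_mat_def cross3_def
      vec_eq_iff forall_3 algebra_simps)

lemma grad6_blocks:
  "vector [grad6 C p 0, grad6 C p 1, grad6 C p 2] = grad_M C p"
  "vector [grad6 C p 3, grad6 C p 4, grad6 C p 5] = grad_g C p"
  by (simp_all add: grad6_def coord6_def grad_M_def grad_g_def vec_eq_iff forall_3)

lemma is_casimir_iff_cross:
  "is_casimir \<nu> D C \<longleftrightarrow>
     (\<forall>M. \<forall>g\<in>D. cross3 (M + \<nu> (g, M \<bullet> g)) (grad_M C (M, g)) + cross3 g (grad_g C (M, g)) = 0
                \<and> cross3 g (grad_M C (M, g)) = 0)"
proof -
  have "is_casimir \<nu> D C \<longleftrightarrow>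
     (\<forall>M. \<forall>g\<in>D. \<forall>i<6. (\<Sum>j<6. Pi_mat (\<nu> (g, M \<bullet> g)) (M, g) i j * grad6 C (M, g) j) = 0)"
    by (auto simp: is_casimir_def mu_of_def)
  then show ?thesis by (simp only: Pi_mat_kernel_iff grad6_blocks)
qed


section \<open>Casimirs only depend on $\vec\gamma$ and $\vec M \cdot \vec\gamma$\<close>

lemma constant_along_line:
  fixes f :: "'a::real_normed_vector \<Rightarrow> real"
  assumes deriv: "\<And>t. (f has_derivative f' (x + t *\<^sub>R v)) (at (x + t *\<^sub>R v))"
    and flat: "\<And>t. f' (x + t *\<^sub>R v) v = 0"
  shows "f (x + v) = f x"
proof -
  define h where "h t = f (x + t *\<^sub>R v)" for t :: real
  have line: "((\<lambda>t. x + t *\<^sub>R v) has_derivative (\<lambda>s. s *\<^sub>R v)) (at t)" for t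
    by (auto intro!: derivative_eq_intros)
  have "(h has_derivative (\<lambda>s. f' (x + t *\<^sub>R v) (s *\<^sub>R v))) (at t)" for t
    unfolding h_def by (rule has_derivative_compose[OF line deriv])
  moreover have "f' (x + t *\<^sub>R v) (s *\<^sub>R v) = 0" for s t
    using linear_scale[OF has_derivative_linear[OF deriv]] flat by simp
  ultimately have "\<forall>t\<in>UNIV. (h has_derivative (\<lambda>s. 0)) (at t within UNIV)" by simp
  then obtain c where "\<forall>t\<in>UNIV. h t = c" using has_derivative_zero_constant[of UNIV h] by blast
  then have "h 1 = h 0" by simp
  then show ?thesis by (simp add: h_def)
qed

text \<open>The derivative of a Casimir vanishes in the $M$-directions orthogonal to $\gamma$,
  so a Casimir is invariant under these translations.\<close>
lemma casimir_translation_invariant: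
  fixes C :: "(real^3) \<times> (real^3) \<Rightarrow> real"
  assumes diff: "\<And>p. p \<in> UNIV \<times> D \<Longrightarrow> C differentiable (at p)"
    and cas: "is_casimir \<nu> D C" and g: "g \<in> D" "g \<noteq> 0" and w: "w \<bullet> g = 0"
  shows "C (M + w, g) = C (M, g)"
proof -
  let ?C' = "\<lambda>p. frechet_derivative C (at p)"
  have deriv: "(C has_derivative ?C' p) (at p)" if "snd p = g" for p
    using diff[of p] g(1) that frechet_derivative_works by (cases p) auto
  have flat: "?C' p (w, 0) = 0" if "snd p = g" for p
  proof -
    obtain M' where p: "p = (M', g)" using \<open>snd p = g\<close> by (cases p) auto
    have "cross3 g (grad_M C p) = 0" using cas g(1) p unfolding is_casimir_iff_cross by blast
    then have "w \<bullet> grad_M C p = 0" using cross_zero_imp_orthogonal g(2) w by blast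
    moreover have "?C' p (w, 0) = w \<bullet> grad_M C p"
      unfolding grad_M_def by (rule linear_on_first_factor[OF has_derivative_linear[OF deriv[OF that]]])
    ultimately show ?thesis by simp
  qed
  have "C ((M, g) + (w, 0)) = C (M, g)"
  proof (rule constant_along_line[where f' = ?C'])
    fix t :: real
    have on_plane: "snd ((M, g) + t *\<^sub>R (w, 0)) = g" by simp
    show "(C has_derivative ?C' ((M, g) + t *\<^sub>R (w, 0))) (at ((M, g) + t *\<^sub>R (w, 0)))"
      using deriv[OF on_plane] .
    show "?C' ((M, g) + t *\<^sub>R (w, 0)) (w, 0) = 0"
      using flat[OF on_plane] .
  qed
  then show ?thesis by simp
qed

text \<open>The reduced function $F(\gamma, s) = C(\frac{s}{|\gamma|^2}\gamma, \gamma)$: evaluate $C$ at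
  the point of the plane $\{\vec M \cdot \gamma = s\}$ on the line through $\gamma$.\<close>
definition reduced :: "((real^3) \<times> (real^3) \<Rightarrow> real) \<Rightarrow> (real^3) \<times> real \<Rightarrow> real" where
  "reduced C q = C ((snd q / (fst q \<bullet> fst q)) *\<^sub>R fst q, fst q)"

lemma casimir_eq_reduced:
  assumes diff: "\<And>p. p \<in> UNIV \<times> D \<Longrightarrow> C differentiable (at p)"
    and cas: "is_casimir \<nu> D C" and "0 \<notin> D" and g: "g \<in> D"
  shows "C (M, g) = reduced C (g, M \<bullet> g)"
proof -
  have "g \<noteq> 0" using assms(3) g by auto
  then have gg: "g \<bullet> g \<noteq> 0" by simp
  let ?w = "((M \<bullet> g) / (g \<bullet> g)) *\<^sub>R g - M"
  have "?w \<bullet> g = 0" using gg by (simp add: inner_diff_left)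
  then have "C (M + ?w, g) = C (M, g)"
    using casimir_translation_invariant[OF diff cas g \<open>g \<noteq> 0\<close>] by blast
  then show ?thesis by (simp add: reduced_def)
qed

text \<open>The reduced function is smooth, since $\gamma \mapsto 1/|\gamma|^2$ is smooth away from 0.\<close>
lemma smooth_reduced:
  fixes C :: "(real^3) \<times> (real^3) \<Rightarrow> real"
  assumes "open D" and "0 \<notin> D" and "smooth_on (UNIV \<times> D) C"
  shows "smooth_on (D \<times> UNIV) (reduced C)"
  unfolding smooth_on_def
proof
  fix k
  let ?S = "D \<times> (UNIV :: real set)"
  have S: "open ?S" using assms(1) by (simp add: open_Times)
  have fst: "Ck_on k ?S fst" and snd: "Ck_on k ?S snd"
    by (simp_all add: Ck_linear bounded_linear_fst bounded_linear_snd)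
  have "(\<lambda>q. fst q \<bullet> fst q) ` ?S \<subseteq> -{0}" using assms(2) by auto
  then have inv: "Ck_on k ?S (\<lambda>q. inverse (fst q \<bullet> fst q))"
    using Ck_compose[OF S _ Ck_inverse Ck_bilinear[OF bounded_bilinear_inner fst fst]] by blast
  have "Ck_on k ?S (\<lambda>q. ((snd q * inverse (fst q \<bullet> fst q)) *\<^sub>R fst q, fst q))"
    by (intro Ck_Pair fst Ck_bilinear[OF bounded_bilinear_scaleR]
        Ck_bilinear[OF bounded_bilinear_mult snd inv])
  moreover have "Ck_on k (UNIV \<times> D) C" using assms(3) unfolding smooth_on_def by blast
  moreover have "(\<lambda>q. ((snd q * inverse (fst q \<bullet> fst q)) *\<^sub>R fst q, fst q)) ` ?S \<subseteq> UNIV \<times> D"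
    by auto
  ultimately have "Ck_on k ?S (\<lambda>q. C ((snd q * inverse (fst q \<bullet> fst q)) *\<^sub>R fst q, fst q))"
    using Ck_compose[OF S] by blast
  moreover have "reduced C = (\<lambda>q. C ((snd q * inverse (fst q \<bullet> fst q)) *\<^sub>R fst q, fst q))"
    by (rule ext) (simp only: reduced_def divide_inverse)
  ultimately show "Ck_on k ?S (reduced C)" by simp
qed


section \<open>The Casimir condition for $C = F(\vec\gamma, \vec M \cdot \vec\gamma)$\<close>

lemma partial_gradients_of_reduced_form:
  fixes F :: "(real^3) \<times> real \<Rightarrow> real" and C :: "(real^3) \<times> (real^3) \<Rightarrow> real"
  assumes "open D" and g: "g \<in> D" and dF: "F differentiable (at (g, M \<bullet> g))"
    and CF: "\<And>M g. g \<in> D \<Longrightarrow> C (M, g) = F (g, M \<bullet> g)"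
  shows "grad_M C (M, g) = d_s F (g, M \<bullet> g) *\<^sub>R g"
    and "grad_g C (M, g) = grad_gamma F (g, M \<bullet> g) + d_s F (g, M \<bullet> g) *\<^sub>R M"
proof -
  let ?F' = "frechet_derivative F (at (g, M \<bullet> g))"
  let ?C' = "\<lambda>h. ?F' (snd h, fst h \<bullet> g + M \<bullet> snd h)"
  have F': "(F has_derivative ?F') (at (g, M \<bullet> g))" using dF frechet_derivative_works by blast
  have "((\<lambda>p. (snd p, fst p \<bullet> snd p))
      has_derivative (\<lambda>h. (snd h, fst h \<bullet> g + M \<bullet> snd h))) (at (M, g))"
    by (auto intro!: derivative_eq_intros simp: add.commute)
  moreover have "(F has_derivative ?F') (at ((\<lambda>p. (snd p, fst p \<bullet> snd p)) (M, g)))"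
    using F' by simp
  ultimately have "((\<lambda>p. F (snd p, fst p \<bullet> snd p)) has_derivative ?C') (at (M, g))"
    by (rule has_derivative_compose)
  then have "(C has_derivative ?C') (at (M, g))"
    by (rule has_derivative_transform_within_open[where s = "UNIV \<times> D"])
       (use assms in \<open>auto simp: open_Times\<close>)
  then have C': "frechet_derivative C (at (M, g)) = ?C'" by (rule frechet_derivative_at[symmetric])
  have lin: "linear ?F'" using F' has_derivative_linear by blast
  have zero: "?F' (0, 0) = 0" using linear_0[OF lin] by (simp add: zero_prod_def)
  have "grad_M C (M, g) $ k = (d_s F (g, M \<bullet> g) *\<^sub>R g) $ k" for k
    using linear_Pair_split[OF lin, of 0 "g $ k"] zero
    by (simp add: grad_M_def d_s_def C' inner_axis')
  then show "grad_M C (M, g) = d_s F (g, M \<bullet> g) *\<^sub>R g"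
    by (simp add: vec_eq_iff)
  have "grad_g C (M, g) $ k = (grad_gamma F (g, M \<bullet> g) + d_s F (g, M \<bullet> g) *\<^sub>R M) $ k" for k
    using linear_Pair_split[OF lin, of "axis k 1" "M $ k"]
    by (simp add: grad_g_def grad_gamma_def d_s_def C' inner_axis mult.commute)
  then show "grad_g C (M, g) = grad_gamma F (g, M \<bullet> g) + d_s F (g, M \<bullet> g) *\<^sub>R M"
    by (simp add: vec_eq_iff)
qed

text \<open>For these gradients, $\gamma \times a = 0$ holds automatically and the other block reduces
  to the cross-product condition of the theorem.\<close>
lemma Pi_block_for_reduced_form:
  fixes M mu g G :: "real^3"
  shows "cross3 (M + mu) (c *\<^sub>R g) + cross3 g (G + c *\<^sub>R M) = - cross3 g (c *\<^sub>R mu - G)"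
  by (simp add: cross3_simps)

text \<open>For $C(\vec M, \gamma) = F(\gamma, \vec M \cdot \gamma)$ the Casimir condition is exactly
  the cross-product condition on $F$; as $\gamma \neq 0$, the value $s = \vec M \cdot \gamma$
  ranges over all reals.\<close>
lemma casimir_iff_reduced:
  fixes F :: "(real^3) \<times> real \<Rightarrow> real" and C :: "(real^3) \<times> (real^3) \<Rightarrow> real"
  assumes "open D" and "0 \<notin> D" and dF: "\<And>q. q \<in> D \<times> UNIV \<Longrightarrow> F differentiable (at q)"
    and CF: "\<And>M g. g \<in> D \<Longrightarrow> C (M, g) = F (g, M \<bullet> g)"
  shows "is_casimir \<nu> D C \<longleftrightarrow>
           (\<forall>g\<in>D. \<forall>s. cross3 g (d_s F (g, s) *\<^sub>R \<nu> (g, s) - grad_gamma F (g, s)) = 0)"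
    (is "_ \<longleftrightarrow> (\<forall>g\<in>D. \<forall>s. ?cond g s)")
proof -
  have point: "(cross3 (M + \<nu> (g, M \<bullet> g)) (grad_M C (M, g)) + cross3 g (grad_g C (M, g)) = 0
      \<and> cross3 g (grad_M C (M, g)) = 0) \<longleftrightarrow> ?cond g (M \<bullet> g)" if g: "g \<in> D" for M g
  proof -
    have dFg: "F differentiable (at (g, M \<bullet> g))" using dF g by simp
    have "grad_M C (M, g) = d_s F (g, M \<bullet> g) *\<^sub>R g"
      using CF by (rule partial_gradients_of_reduced_form(1)[OF assms(1) g dFg])
    moreover have "grad_g C (M, g) = grad_gamma F (g, M \<bullet> g) + d_s F (g, M \<bullet> g) *\<^sub>R M"
      using CF by (rule partial_gradients_of_reduced_form(2)[OF assms(1) g dFg])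
    ultimately show ?thesis
      by (simp only: Pi_block_for_reduced_form) (simp add: cross_mult_right)
  qed
  have "is_casimir \<nu> D C \<longleftrightarrow> (\<forall>M. \<forall>g\<in>D. ?cond g (M \<bullet> g))"
    unfolding is_casimir_iff_cross using point by blast
  also have "\<dots> \<longleftrightarrow> (\<forall>g\<in>D. \<forall>s. ?cond g s)"
  proof safe
    fix g s assume "\<forall>M. \<forall>g\<in>D. ?cond g (M \<bullet> g)" and g: "g \<in> D"
    moreover have "((s / (g \<bullet> g)) *\<^sub>R g) \<bullet> g = s" using g assms(2) by auto
    ultimately show "?cond g s" by metis
  qed auto
  finally show ?thesis .
qed


text \<open>$C_1 = |\gamma|^2 / 2$ has the reduced form $F(\gamma, s) = \gamma\cdot\gamma / 2$ with
  $F_s = 0$ and $\nabla_\gamma F = \gamma$.\<close>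
lemma half_norm_gamma_casimir:
  assumes "open D" and "0 \<notin> D"
  shows "is_casimir \<nu> D (\<lambda>(M, g). (1/2) * (norm g)\<^sup>2)"
proof -
  define F :: "(real^3) \<times> real \<Rightarrow> real" where "F q = (1/2) * (fst q \<bullet> fst q)" for q
  have dF: "(F has_derivative (\<lambda>h. fst q \<bullet> fst h)) (at q)" for q
    unfolding F_def by (auto intro!: derivative_eq_intros simp: inner_commute)
  have F': "frechet_derivative F (at q) = (\<lambda>h. fst q \<bullet> fst h)" for q
    using frechet_derivative_at[OF dF] by simp
  have ds: "d_s F q = 0" and grad: "grad_gamma F q = fst q" for q
    by (simp_all add: d_s_def grad_gamma_def F' vec_eq_iff inner_axis)
  have diff: "F differentiable (at q)" for q using dF differentiable_def by blast
  have CF: "(1/2) * (norm g)\<^sup>2 = F (g, M \<bullet> g)" for M g :: "real^3"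
    by (simp add: F_def power2_norm_eq_inner)
  have "is_casimir \<nu> D (\<lambda>(M, g). (1/2) * (norm g)\<^sup>2) \<longleftrightarrow>
      (\<forall>g\<in>D. \<forall>s. cross3 g (d_s F (g, s) *\<^sub>R \<nu> (g, s) - grad_gamma F (g, s)) = 0)"
    using diff CF by (intro casimir_iff_reduced[OF assms]) auto
  then show ?thesis by (simp add: ds grad)
qed

text \<open>Characterisation of the smooth Casimirs: necessity takes $F$ = reduced C, sufficiency
  is the computation of casimir_iff_reduced.\<close>
lemma casimir_characterisation:
  fixes C :: "(real^3) \<times> (real^3) \<Rightarrow> real"
  assumes "open D" and "0 \<notin> D" and sC: "smooth_on (UNIV \<times> D) C"
  shows "is_casimir \<nu> D C \<longleftrightarrow>
           (\<exists>F. smooth_on (D \<times> UNIV) F \<and> (\<forall>M g. g \<in> D \<longrightarrow> C (M, g) = F (g, M \<bullet> g)) \<and>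
              (\<forall>g\<in>D. \<forall>s. cross3 g (d_s F (g, s) *\<^sub>R \<nu> (g, s) - grad_gamma F (g, s)) = 0))"
    (is "_ \<longleftrightarrow> (\<exists>F. smooth_on (D \<times> UNIV) F \<and> ?factors F \<and> ?cond F)")
proof
  assume cas: "is_casimir \<nu> D C"
  have diff: "\<And>p. p \<in> UNIV \<times> D \<Longrightarrow> C differentiable (at p)"
    using smooth_on_imp_differentiable[OF sC] .
  have sF: "smooth_on (D \<times> UNIV) (reduced C)" using smooth_reduced[OF assms] .
  have CF: "\<And>M g. g \<in> D \<Longrightarrow> C (M, g) = reduced C (g, M \<bullet> g)"
    using casimir_eq_reduced[OF diff cas assms(2)] .
  have "?cond (reduced C)"
    using casimir_iff_reduced[OF assms(1,2) smooth_on_imp_differentiable[OF sF] CF] cas by blast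
  then show "\<exists>F. smooth_on (D \<times> UNIV) F \<and> ?factors F \<and> ?cond F" using sF CF by blast
next
  assume "\<exists>F. smooth_on (D \<times> UNIV) F \<and> ?factors F \<and> ?cond F"
  then obtain F where sF: "smooth_on (D \<times> UNIV) F"
    and CF: "\<And>M g. g \<in> D \<Longrightarrow> C (M, g) = F (g, M \<bullet> g)" and cond: "?cond F"
    by blast
  show "is_casimir \<nu> D C"
    using casimir_iff_reduced[OF assms(1,2) smooth_on_imp_differentiable[OF sF] CF] cond by blast
qed

theorem mainTheorem2:
  fixes D :: "(real^3) set" and \<nu> :: "(real^3) \<times> real \<Rightarrow> real^3"
  assumes "open D" and "0 \<notin> D" and "smooth_on (D \<times> UNIV) \<nu>"
  shows "(\<forall>C :: (real^3) \<times> (real^3) \<Rightarrow> real. smooth_on (UNIV \<times> D) C \<longrightarrow>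
            (is_casimir \<nu> D C \<longleftrightarrow>
              (\<exists>F :: (real^3) \<times> real \<Rightarrow> real. smooth_on (D \<times> UNIV) F \<and>
                 (\<forall>M g. g \<in> D \<longrightarrow> C (M, g) = F (g, M \<bullet> g)) \<and>
                 (\<forall>g\<in>D. \<forall>s. cross3 g (d_s F (g, s) *\<^sub>R \<nu> (g, s) - grad_gamma F (g, s)) = 0))))
         \<and> is_casimir \<nu> D (\<lambda>(M, g). (1/2) * (norm g)\<^sup>2)"
  using casimir_characterisation[OF assms(1,2)] half_norm_gamma_casimir[OF assms(1,2)] by blast

end
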